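(* Let $m\ge 1$ and let $A_1,\dots,A_m$ be states, with $A_{m+1}:=A_1$. Let $\varepsilon\ge 0$ with $m\varepsilon<1$. Then $$\sum_{i=1}^{m}W^{\varepsilon}(A_i\to A_{i+1})\ \le\ W^{m\varepsilon}(A_1\to A_1).$$ Moreover $W^0(A\to A)=0$ for every state $A$. Hence for $\varepsilon=0$ the left-hand side is at most $0$.
   Context: Conventions. The constants $k>0$ (Boltzmann's constant) and $T>0$ (temperature) are fixed. A state is a finite-level system with energies $E_1,\dots,E_d\in\mathbb{R}\cup\{+\infty\}$, not all $+\infty$, together with a diagonal density matrix $\rho=\sum_i\lambda_i|e_i\rangle\langle e_i|$. Equivalently, it is a probability vector $(\lambda_i)$ over the levels, and we require $\lambda_i=0$ whenever $E_i=+\infty$. Gibbs rescaling. $G^T(\rho)$ is the function on $[0,\infty)$ built as follows. Each level $i$ with $E_i<\infty$ is represented by a block: an interval of length $e^{-E_i/kT}$ on which the function takes the constant value $\lambda_i e^{E_i/kT}$, so the block has area $\lambda_i$. The blocks are placed consecutively starting at $0$, in order of nonincreasing height. The function is $0$ beyond $Z=\sum_{i:E_i<\infty}e^{-E_i/kT}$. Thus $G^T(\rho)$ is a nonincreasing probability density supported in $[0,Z]$. Relative mixedness. For nonincreasing integrable functions $f,g\ge 0$ on $[0,\infty)$, $$M(f\|g):=\max\Big\{m>0:\ \int_0^l f(x)\,dx\ge\int_0^{lm}g(x)\,dx\ \text{for all } l\ge 0\Big\}.$$ For $\varepsilon\in[0,1)$ define $$W^\varepsilon(\rho\to\sigma):=kT\ln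 M\big(G^T(\rho)/(1-\varepsilon)\,\big\|\,G^T(\sigma)\big).$$ *)

theory Defs
  imports "HOL-Analysis.Analysis" "HOL-Library.Extended_Real"
begin

text \<open>A state is a list of levels (E_i, lambda_i): energy E_i in R \<union> {+\<infinity>}
  (an ereal different from -\<infinity>) and occupation probability lambda_i.\<close>
type_synonym state = "(ereal \<times> real) list"

definition valid_state :: "state \<Rightarrow> bool" where
  "valid_state s \<longleftrightarrow>
     (\<forall>(E, l) \<in> set s. E \<noteq> -\<infinity>) \<and>
     (\<exists>(E, l) \<in> set s. E \<noteq> \<infinity>) \<and>
     (\<forall>(E, l) \<in> set s. l \<ge> 0) \<and>
     (\<Sum>(E, l) \<leftarrow> s. l) = 1 \<and>
     (\<forall>(E, l) \<in> set s. E = \<infinity> \<longrightarrow> l = 0)"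

definition gibbs_blocks :: "real \<Rightarrow> real \<Rightarrow> state \<Rightarrow> (real \<times> real) list" where
  "gibbs_blocks k T s =
     [(l * exp (real_of_ereal E / (k * T)), exp (- real_of_ereal E / (k * T))).
        (E, l) \<leftarrow> s, E \<noteq> \<infinity>]"

fun place_blocks :: "(real \<times> real) list \<Rightarrow> real \<Rightarrow> real" where
  "place_blocks [] x = 0"
| "place_blocks ((h, w) # bs) x = (if x < w then h else place_blocks bs (x - w))"

definition gibbs :: "real \<Rightarrow> real \<Rightarrow> state \<Rightarrow> real \<Rightarrow> real" where
  "gibbs k T s = place_blocks (rev (sort_key fst (gibbs_blocks k T s)))"

definition rel_mix :: "(real \<Rightarrow> real) \<Rightarrow> (real \<Rightarrow> real) \<Rightarrow> real" where
  "rel_mix f g = (GREATEST m. m > 0 \<and>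
      (\<forall>l\<ge>0. integral {0..l} f \<ge> integral {0..l * m} g))"

definition work :: "real \<Rightarrow> real \<Rightarrow> real \<Rightarrow> state \<Rightarrow> state \<Rightarrow> real" where
  "work k T eps \<rho> \<sigma> =
     k * T * ln (rel_mix (\<lambda>x. gibbs k T \<rho> x / (1 - eps)) (gibbs k T \<sigma>))"

end

theory Submission
  imports Defs
begin

(* The proof works with cumulative functions  l \<mapsto> \<integral>\<^sub>0\<^sup>l f  instead of densities.

   A list of blocks (height, width) placed side by side has an explicit
      cumulative function stair_area; when the heights are nonnegative and nonincreasing
      it is monotone, Lipschitz with the top height, constant beyond the total width and
      lies above the chord from the origin (concavity).
   2. Mixedness.  rel_mix f g only depends on the cumulative functions F, G through the
      relation  dominates F G m  ("G(l m) \<le> F(l) for all l \<ge> 0").  Domination composes multiplicatively along a chain of states.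
   3. States.  The cumulative function of a Gibbs rescaling is a normalised concave
      staircase; hence every W^\<epsilon>(\<rho> \<rightarrow> \<sigma>) is k T ln of an attained greatest ratio, and
      W^0(\<rho> \<rightarrow> \<rho>) = 0.
   4. Around a cycle A\<^sub>1 \<rightarrow> \<dots> \<rightarrow> A\<^sub>m \<rightarrow> A\<^sub>1 the optimal ratios multiply to a ratio that
      dominates A\<^sub>1 by itself with factor (1-\<epsilon>)\<^sup>m \<ge> 1 - m\<epsilon> (Bernoulli), so the product is
      at most the optimal ratio for W^{m\<epsilon>}(A\<^sub>1 \<rightarrow> A\<^sub>1); take logarithms. *)

fun stair_area :: "(real \<times> real) list \<Rightarrow> real \<Rightarrow> real" where
  "stair_area [] l = 0"
| "stair_area ((h, w) # bs) l = (if l \<le> w then h * l else h * w + stair_area bs (l - w))"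

definition stair_width :: "(real \<times> real) list \<Rightarrow> real" where
  "stair_width bs = sum_list (map snd bs)"

definition stair_mass :: "(real \<times> real) list \<Rightarrow> real" where
  "stair_mass bs = sum_list (map (\<lambda>(h, w). h * w) bs)"

lemma has_integral_place_blocks:
  assumes "\<forall>(h, w) \<in> set bs. w > 0" "0 \<le> l"
  shows "(place_blocks bs has_integral stair_area bs l) {0..l}"
  using assms
proof (induction bs arbitrary: l)
  case Nil
  then show ?case using has_integral_0[of "{0..l}"] by simp
next
  case (Cons p bs)
  obtain h w where p: "p = (h, w)" by fastforce
  have w: "w > 0" using Cons.prems p by auto
  have first_block: "(place_blocks (p # bs) has_integral h * x) {0..x}" if "0 \<le> x" "x \<le> w" for x
  proof -
    have "((\<lambda>_. h) has_integral h * x) {0..x}"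
      using has_integral_const_real[of h 0 x] that by (simp add: mult.commute)
    then show ?thesis
      by (rule has_integral_spike_finite[where S="{w}", rotated -1]) (use that p in auto)
  qed
  show ?case
  proof (cases "l \<le> w")
    case True
    then show ?thesis using first_block[OF Cons.prems(2) True] p by (simp del: place_blocks.simps)
  next
    case False
    have "(place_blocks bs has_integral stair_area bs (l - w)) {0..l - w}"
      using Cons.IH[of "l - w"] Cons.prems False by auto
    then have "((\<lambda>x. place_blocks bs (x - w)) has_integral stair_area bs (l - w)) {w..l}"
      using has_integral_shift_Icc_real[of "\<lambda>x. place_blocks bs (x - w)" w _ 0 "l - w"]
      by (simp add: o_def)
    then have rest: "(place_blocks (p # bs) has_integral stair_area bs (l - w)) {w..l}"
      by (rule has_integral_spike_finite[where S="{}", rotated -1]) (use p in auto)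
    have "(place_blocks (p # bs) has_integral h * w + stair_area bs (l - w)) {0..l}"
      by (rule has_integral_combine[OF _ _ first_block[of w] rest]) (use w False in auto)
    then show ?thesis using False p by (simp del: place_blocks.simps)
  qed
qed

lemma stair_area_0: "\<forall>(h, w) \<in> set bs. w > 0 \<Longrightarrow> stair_area bs 0 = 0"
  by (cases bs) auto

lemma stair_width_nonneg: "\<forall>(h, w) \<in> set bs. w > 0 \<Longrightarrow> stair_width bs \<ge> 0"
  unfolding stair_width_def by (induction bs) (auto simp: add_nonneg_nonneg less_imp_le)

lemma stair_area_increment:
  assumes "\<forall>(h, w) \<in> set bs. w > 0" "\<forall>(h, w) \<in> set bs. 0 \<le> h \<and> h \<le> c"
    and "0 \<le> c" "0 \<le> a" "a \<le> b"
  shows "0 \<le> stair_area bs b - stair_area bs a \<and> stair_area bs b - stair_area bs a \<le> c * (b - a)"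
  using assms
proof (induction bs arbitrary: a b)
  case Nil
  then show ?case by simp
next
  case (Cons p r)
  obtain h w where p: "p = (h, w)" by fastforce
  have h: "0 \<le> h" "h \<le> c" using Cons.prems p by auto
  consider "b \<le> w" | "a \<le> w" "w < b" | "w < a" by linarith
  then show ?case
  proof cases
    case 1
    have "h * (b - a) \<le> c * (b - a)" "0 \<le> h * (b - a)"
      using h Cons.prems by (auto intro: mult_right_mono)
    then show ?thesis using 1 p Cons.prems by (simp add: algebra_simps)
  next
    case 2
    have "0 \<le> stair_area r (b - w) - stair_area r 0 \<and>
        stair_area r (b - w) - stair_area r 0 \<le> c * (b - w - 0)"
      using Cons.IH[of 0 "b - w"] Cons.prems 2 by auto
    moreover have "stair_area r 0 = 0" using stair_area_0 Cons.prems by auto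
    moreover have "h * (w - a) \<le> c * (w - a)" "0 \<le> h * (w - a)"
      using h 2 by (auto intro: mult_right_mono)
    ultimately show ?thesis using p 2 h by (simp add: algebra_simps)
  next
    case 3
    then show ?thesis using Cons.IH[of "a - w" "b - w"] p Cons.prems by simp
  qed
qed

lemma stair_area_full:
  assumes "\<forall>(h, w) \<in> set bs. w > 0" "stair_width bs \<le> l"
  shows "stair_area bs l = stair_mass bs"
  using assms
proof (induction bs arbitrary: l)
  case Nil
  then show ?case by (simp add: stair_mass_def)
next
  case (Cons p r)
  obtain h w where p: "p = (h, w)" by fastforce
  have width: "stair_width (p # r) = w + stair_width r" using p by (simp add: stair_width_def)
  have mass: "stair_mass (p # r) = h * w + stair_mass r" using p by (simp add: stair_mass_def)
  have ih: "stair_area r (l - w) = stair_mass r" using Cons.IH[of "l - w"] Cons.prems width by auto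
  show ?case
  proof (cases "l \<le> w")
    case True
    then have "l = w" using width stair_width_nonneg[of r] Cons.prems by auto
    then show ?thesis using ih stair_area_0[of r] Cons.prems p mass by auto
  next
    case False
    then show ?thesis using ih p mass by simp
  qed
qed

lemma stair_mass_le:
  assumes "\<forall>(h, w) \<in> set bs. w \<ge> 0 \<and> 0 \<le> h \<and> h \<le> c"
  shows "stair_mass bs \<le> c * stair_width bs"
  using assms
proof (induction bs)
  case Nil
  then show ?case by (simp add: stair_mass_def stair_width_def)
next
  case (Cons p r)
  obtain h w where p: "p = (h, w)" by fastforce
  have "h * w \<le> c * w" using Cons.prems p by (intro mult_right_mono) auto
  then show ?case using Cons p by (simp add: stair_mass_def stair_width_def algebra_simps)
qed

text \<open>For nonincreasing heights the area is concave, hence lies above the chord from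
  \<open>(0, 0)\<close> to \<open>(stair_width bs, stair_mass bs)\<close>.\<close>
lemma stair_area_above_chord:
  assumes "\<forall>(h, w) \<in> set bs. w > 0" "\<forall>(h, w) \<in> set bs. 0 \<le> h"
    and "sorted_wrt (\<lambda>a b. fst b \<le> fst a) bs" "0 \<le> l" "l \<le> stair_width bs"
  shows "l * stair_mass bs \<le> stair_width bs * stair_area bs l"
  using assms
proof (induction bs arbitrary: l)
  case Nil
  then show ?case by (simp add: stair_mass_def stair_width_def)
next
  case (Cons p r)
  obtain h w where p: "p = (h, w)" by fastforce
  have w: "w > 0" and h: "0 \<le> h" using Cons.prems p by auto
  have lower: "\<forall>(h', w') \<in> set r. 0 \<le> h' \<and> h' \<le> h" using Cons.prems p by auto
  have width: "stair_width (p # r) = w + stair_width r" using p by (simp add: stair_width_def)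
  have mass: "stair_mass (p # r) = h * w + stair_mass r" using p by (simp add: stair_mass_def)
  show ?case
  proof (cases "l \<le> w")
    case True
    have "stair_mass r \<le> h * stair_width r"
      using stair_mass_le[of r h] lower Cons.prems by fastforce
    then have "l * stair_mass r \<le> l * (h * stair_width r)"
      using Cons.prems by (intro mult_left_mono) auto
    then show ?thesis using True p width mass by (simp add: algebra_simps)
  next
    case False
    define l' where "l' = l - w"
    have l': "0 \<le> l'" "l' \<le> stair_width r" using False Cons.prems width by (auto simp: l'_def)
    have ih: "l' * stair_mass r \<le> stair_width r * stair_area r l'"
      using Cons.IH[of l'] Cons.prems l' by auto
    have "stair_area r (stair_width r) - stair_area r l' \<le> h * (stair_width r - l')"
      using stair_area_increment[of r h l' "stair_width r"] lower Cons.prems l' h by auto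
    moreover have "stair_area r (stair_width r) = stair_mass r"
      using stair_area_full Cons.prems by auto
    ultimately have "w * (stair_mass r - stair_area r l') \<le> w * (h * (stair_width r - l'))"
      using w by (intro mult_left_mono) auto
    then have "(w + l') * (h * w + stair_mass r) \<le> (w + stair_width r) * (h * w + stair_area r l')"
      using ih by (simp add: algebra_simps)
    then show ?thesis using False p width mass by (simp add: l'_def)
  qed
qed

definition cumulative :: "(real \<Rightarrow> real) \<Rightarrow> real \<Rightarrow> real" where
  "cumulative f l = integral {0..l} f"

definition dominates :: "(real \<Rightarrow> real) \<Rightarrow> (real \<Rightarrow> real) \<Rightarrow> real \<Rightarrow> bool" where
  "dominates F G m \<longleftrightarrow> (\<forall>l\<ge>0. G (l * m) \<le> F l)"

definition mixedness :: "(real \<Rightarrow> real) \<Rightarrow> (real \<Rightarrow> real) \<Rightarrow> real" where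
  "mixedness F G = (GREATEST m. m > 0 \<and> dominates F G m)"

lemma rel_mix_eq_mixedness: "rel_mix f g = mixedness (cumulative f) (cumulative g)"
  by (simp add: rel_mix_def mixedness_def dominates_def cumulative_def)

lemma cumulative_divide: "cumulative (\<lambda>x. f x / c) = (\<lambda>l. cumulative f l / c)"
  by (simp add: cumulative_def fun_eq_iff)

text \<open>The set of dominating ratios is closed under suprema as soon as \<open>G\<close> is Lipschitz;
  so if it is nonempty and bounded, its greatest element exists.\<close>
lemma mixedness_attained:
  assumes lipschitz: "\<And>a b. 0 \<le> a \<Longrightarrow> a \<le> b \<Longrightarrow> G b - G a \<le> L * (b - a)" "0 \<le> L"
    and witness: "m0 > 0" "dominates F G m0"
    and bounded: "\<And>m. m > 0 \<Longrightarrow> dominates F G m \<Longrightarrow> m \<le> B"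
  shows "mixedness F G > 0" "dominates F G (mixedness F G)"
    and "\<And>m. m > 0 \<Longrightarrow> dominates F G m \<Longrightarrow> m \<le> mixedness F G"
proof -
  define S where "S = {m. m > 0 \<and> dominates F G m}"
  have nonempty: "S \<noteq> {}" and bdd: "bdd_above S"
    using witness bounded by (auto simp: S_def bdd_above_def)
  define s where "s = Sup S"
  have upper: "m \<le> s" if "m \<in> S" for m using cSup_upper[OF that bdd] by (simp add: s_def)
  have s_pos: "s > 0" using upper[of m0] witness by (simp add: S_def)
  have "dominates F G s"
    unfolding dominates_def
  proof (intro allI impI)
    fix l :: real assume l: "0 \<le> l"
    show "G (l * s) \<le> F l"
    proof (rule field_le_epsilon)
      fix e :: real assume e: "e > 0"
      have Ll: "0 \<le> L * l" using lipschitz(2) l by simp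
      have "s - e / (L * l + 1) < s" using e Ll by simp
      then obtain m where "m \<in> S" and close: "s - e / (L * l + 1) < m"
        using less_cSup_iff[OF nonempty bdd] by (auto simp: s_def)
      then have m: "m > 0" "m \<le> s" "G (l * m) \<le> F l" using upper l by (auto simp: S_def dominates_def)
      have "G (l * s) - G (l * m) \<le> L * (l * s - l * m)"
        using lipschitz(1)[of "l * m" "l * s"] l m by (simp add: mult_left_mono)
      also have "\<dots> \<le> (L * l + 1) * (s - m)"
        using m by (simp add: algebra_simps)
      also have "\<dots> \<le> e" using close Ll by (simp add: field_simps)
      finally show "G (l * s) \<le> F l + e" using m by simp
    qed
  qed
  then have "mixedness F G = s"
    unfolding mixedness_def by (intro Greatest_equality) (use s_pos upper in \<open>auto simp: S_def\<close>)
  then show "mixedness F G > 0" "dominates F G (mixedness F G)"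
    and "\<And>m. m > 0 \<Longrightarrow> dominates F G m \<Longrightarrow> m \<le> mixedness F G"
    using s_pos \<open>dominates F G s\<close> upper by (auto simp: S_def)
qed

lemma dominates_compose:
  assumes "dominates (\<lambda>l. F l / c) G a" "dominates (\<lambda>l. G l / d) H b" "0 \<le> a" "0 < d"
  shows "dominates (\<lambda>l. F l / (c * d)) H (a * b)"
  unfolding dominates_def
proof (intro allI impI)
  fix l :: real assume l: "0 \<le> l"
  have "H (l * (a * b)) = H ((l * a) * b)" by (simp add: mult.assoc)
  also have "\<dots> \<le> G (l * a) / d" using assms(2) l assms(3) by (simp add: dominates_def)
  also have "\<dots> \<le> (F l / c) / d"
    using assms(1) l assms(4) by (intro divide_right_mono) (auto simp: dominates_def)
  finally show "H (l * (a * b)) \<le> F l / (c * d)" by simp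
qed

lemma dominates_chain:
  assumes step: "\<And>i. i \<in> {1..n} \<Longrightarrow> 0 \<le> r i \<and> dominates (\<lambda>l. C i l / c) (C (Suc i)) (r i)"
    and c: "0 < c"
  shows "dominates (\<lambda>l. C 1 l / c ^ n) (C (Suc n)) (\<Prod>i=1..n. r i)"
  using step
proof (induction n)
  case 0
  then show ?case by (simp add: dominates_def)
next
  case (Suc n)
  have "dominates (\<lambda>l. C 1 l / (c ^ n * c)) (C (Suc (Suc n))) ((\<Prod>i=1..n. r i) * r (Suc n))"
    using Suc c by (intro dominates_compose prod_nonneg) auto
  then show ?case by (simp add: mult.commute)
qed

lemma dominates_mono:
  assumes "dominates F' G m" "\<And>l. 0 \<le> l \<Longrightarrow> F' l \<le> F l"
  shows "dominates F G m"
  using assms by (force simp: dominates_def)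

lemma dominates_self_le_one:
  assumes linear: "\<And>x. 0 \<le> x \<Longrightarrow> x \<le> w \<Longrightarrow> F x = h * x" and "h > 0" "w > 0"
    and "m > 0" "dominates F F m"
  shows "m \<le> 1"
proof (rule ccontr)
  assume "\<not> m \<le> 1"
  then have "w / m < w" "0 \<le> w / m" using assms by (auto simp: field_simps)
  moreover have "F (w / m * m) \<le> F (w / m)"
    using \<open>dominates F F m\<close> \<open>0 \<le> w / m\<close> unfolding dominates_def by blast
  ultimately have "h * w \<le> h * (w / m)" using assms linear[of w] linear[of "w / m"] by simp
  moreover have "h * (w / m) < h * w" using \<open>w / m < w\<close> \<open>h > 0\<close> by (rule mult_strict_left_mono)
  ultimately show False by linarith
qed

text \<open>Shape of the cumulative function of a Gibbs rescaling: it starts linearly with the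
  top height \<open>h\<close> on \<open>[0, w]\<close>, grows with slope between \<open>0\<close> and \<open>h\<close>, reaches total
  mass \<open>1\<close> at the partition function \<open>Z\<close> and stays above the chord \<open>l / Z\<close> before.\<close>
definition gibbs_profile :: "(real \<Rightarrow> real) \<Rightarrow> real \<Rightarrow> real \<Rightarrow> real \<Rightarrow> bool" where
  "gibbs_profile F h Z w \<longleftrightarrow> h > 0 \<and> Z > 0 \<and> w > 0 \<and>
     (\<forall>x. 0 \<le> x \<longrightarrow> x \<le> w \<longrightarrow> F x = h * x) \<and>
     (\<forall>a b. 0 \<le> a \<longrightarrow> a \<le> b \<longrightarrow> 0 \<le> F b - F a \<and> F b - F a \<le> h * (b - a)) \<and>
     (\<forall>l\<ge>Z. F l = 1) \<and>
     (\<forall>l. 0 \<le> l \<longrightarrow> l \<le> Z \<longrightarrow> l \<le> Z * F l)"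

lemma gibbs_profile_bounds:
  assumes "gibbs_profile F h Z w" "0 \<le> x"
  shows "0 \<le> F x" "F x \<le> 1" "F x \<le> h * x"
proof -
  have F0: "F 0 = 0" using assms(1) by (simp add: gibbs_profile_def)
  show "0 \<le> F x" "F x \<le> h * x"
    using assms F0 unfolding gibbs_profile_def by (metis diff_zero order.refl)+
  have mono: "\<forall>a b. 0 \<le> a \<longrightarrow> a \<le> b \<longrightarrow> 0 \<le> F b - F a \<and> F b - F a \<le> h * (b - a)"
    and full: "\<forall>l\<ge>Z. F l = 1"
    using assms(1) unfolding gibbs_profile_def by blast+
  show "F x \<le> 1"
    using mono[rule_format, of x "max x Z"] full[rule_format, of "max x Z"] assms(2) by simp
qed

text \<open>Between two Gibbs profiles (the first one scaled up by \<open>1 / (1 - e)\<close>) the greatest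
  dominating ratio exists: \<open>1 / (h\<^sub>G Z\<^sub>F)\<close> dominates, and every dominating ratio is at
  most \<open>h\<^sub>F Z\<^sub>G / (1 - e)\<close>.\<close>
lemma gibbs_profile_mixedness_attained:
  assumes F: "gibbs_profile F hF ZF wF" and G: "gibbs_profile G hG ZG wG"
    and e: "0 \<le> e" "e < 1"
  defines "F' \<equiv> \<lambda>l. F l / (1 - e)"
  shows "mixedness F' G > 0" "dominates F' G (mixedness F' G)"
    and "\<And>m. m > 0 \<Longrightarrow> dominates F' G m \<Longrightarrow> m \<le> mixedness F' G"
proof -
  have pos: "hF > 0" "ZF > 0" "hG > 0" "ZG > 0"
    using F G by (auto simp: gibbs_profile_def)
  have F_le_F': "F l \<le> F' l" if "0 \<le> l" for l
    using gibbs_profile_bounds(1)[OF F that] e by (simp add: F'_def le_divide_eq mult_left_le)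
  define m0 where "m0 = 1 / (hG * ZF)"
  have m0: "m0 > 0" using pos by (simp add: m0_def)
  have "dominates F' G m0"
    unfolding dominates_def
  proof (intro allI impI)
    fix l :: real assume l: "0 \<le> l"
    have "G (l * m0) \<le> F l"
    proof (cases "ZF \<le> l")
      case True
      then show ?thesis using gibbs_profile_bounds(2)[OF G] F l m0 by (simp add: gibbs_profile_def)
    next
      case False
      have "G (l * m0) \<le> hG * (l * m0)" using gibbs_profile_bounds(3)[OF G] l m0 by simp
      also have "\<dots> = l / ZF" using pos by (simp add: m0_def field_simps)
      also have "\<dots> \<le> F l"
        using F l False pos by (simp add: gibbs_profile_def divide_le_eq mult.commute)
      finally show ?thesis .
    qed
    then show "G (l * m0) \<le> F' l" using F_le_F'[OF l] by linarith
  qed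
  moreover have "m \<le> hF * ZG / (1 - e)" if m: "m > 0" "dominates F' G m" for m
  proof -
    have l: "0 \<le> ZG / m" using m pos by simp
    have "1 = G (ZG / m * m)" using G m by (simp add: gibbs_profile_def)
    also have "\<dots> \<le> F' (ZG / m)" using m(2) l unfolding dominates_def by blast
    also have "\<dots> = F (ZG / m) / (1 - e)" by (simp add: F'_def)
    also have "\<dots> \<le> hF * (ZG / m) / (1 - e)"
      using gibbs_profile_bounds(3)[OF F l] e by (intro divide_right_mono) auto
    finally have "m * (1 - e) \<le> hF * ZG" using m e by (simp add: field_simps)
    then show ?thesis using e by (simp add: field_simps)
  qed
  moreover have "\<And>a b. 0 \<le> a \<Longrightarrow> a \<le> b \<Longrightarrow> G b - G a \<le> hG * (b - a)"
    using G by (simp add: gibbs_profile_def)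
  ultimately show "mixedness F' G > 0" "dominates F' G (mixedness F' G)"
    and "\<And>m. m > 0 \<Longrightarrow> dominates F' G m \<Longrightarrow> m \<le> mixedness F' G"
    using mixedness_attained[of G hG m0 F' "hF * ZG / (1 - e)"] m0 pos by auto
qed

definition blocks :: "real \<Rightarrow> real \<Rightarrow> state \<Rightarrow> (real \<times> real) list" where
  "blocks k T s = rev (sort_key fst (gibbs_blocks k T s))"

lemma stair_mass_gibbs_blocks:
  assumes "\<forall>(E, l) \<in> set s. E = \<infinity> \<longrightarrow> l = 0"
  shows "stair_mass (gibbs_blocks k T s) = (\<Sum>(E, l) \<leftarrow> s. l)"
  using assms
proof (induction s)
  case Nil
  then show ?case by (simp add: stair_mass_def gibbs_blocks_def)
next
  case (Cons p s)
  obtain E l where p: "p = (E, l)" by fastforce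
  have "exp (real_of_ereal E / (k * T)) * exp (- real_of_ereal E / (k * T)) = 1"
    by (simp add: mult_exp_exp)
  then show ?case using Cons p by (auto simp: stair_mass_def gibbs_blocks_def mult.assoc)
qed

lemma blocks_valid:
  assumes "valid_state s"
  shows "\<forall>(h, w) \<in> set (blocks k T s). w > 0"
    and "\<forall>(h, w) \<in> set (blocks k T s). 0 \<le> h"
    and "sorted_wrt (\<lambda>a b. fst b \<le> fst a) (blocks k T s)"
    and "stair_mass (blocks k T s) = 1"
proof -
  have set_blocks: "set (blocks k T s) = set (gibbs_blocks k T s)" by (simp add: blocks_def)
  show "\<forall>(h, w) \<in> set (blocks k T s). w > 0"
    unfolding set_blocks by (auto simp: gibbs_blocks_def)
  show "\<forall>(h, w) \<in> set (blocks k T s). 0 \<le> h"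
    unfolding set_blocks using assms by (fastforce simp: gibbs_blocks_def valid_state_def)
  show "sorted_wrt (\<lambda>a b. fst b \<le> fst a) (blocks k T s)"
    unfolding blocks_def sorted_wrt_rev
    using sorted_sort_key[of fst "gibbs_blocks k T s"] by (simp add: sorted_map)
  have "mset (blocks k T s) = mset (gibbs_blocks k T s)" by (simp add: blocks_def)
  then have "stair_mass (blocks k T s) = stair_mass (gibbs_blocks k T s)"
    unfolding stair_mass_def by (metis mset_map sum_mset_sum_list)
  also have "\<dots> = 1" using stair_mass_gibbs_blocks[of s k T] assms by (auto simp: valid_state_def)
  finally show "stair_mass (blocks k T s) = 1" .
qed

lemma cumulative_gibbs:
  assumes "valid_state s" "0 \<le> x"
  shows "cumulative (gibbs k T s) x = stair_area (blocks k T s) x"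
  unfolding cumulative_def gibbs_def blocks_def[symmetric]
  using has_integral_place_blocks[OF blocks_valid(1)[OF assms(1)] assms(2)] by blast

lemma gibbs_profile_cumulative:
  assumes "valid_state s"
  obtains h Z w where "gibbs_profile (cumulative (gibbs k T s)) h Z w"
proof -
  let ?bs = "blocks k T s"
  note bs_valid = blocks_valid[OF assms, of k T]
  have "?bs \<noteq> []" using bs_valid(4) by (auto simp: stair_mass_def)
  then obtain h w r where bs: "?bs = (h, w) # r" by (metis list.exhaust surj_pair)
  have w: "w > 0" using bs_valid(1) bs by auto
  have below_top: "\<forall>(h', w') \<in> set ?bs. 0 \<le> h' \<and> h' \<le> h" using bs_valid(2,3) bs by auto
  have h: "h > 0"
  proof (rule ccontr)
    assume "\<not> h > 0"
    then have "stair_mass ?bs \<le> 0 * stair_width ?bs"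
      using below_top bs_valid(1) by (intro stair_mass_le) fastforce
    then show False using bs_valid(4) by simp
  qed
  have Z: "stair_width ?bs > 0"
    using bs w stair_width_nonneg[of r] bs_valid(1) by (auto simp: stair_width_def)
  have "gibbs_profile (stair_area ?bs) h (stair_width ?bs) w"
    unfolding gibbs_profile_def
    using h Z w bs stair_area_increment[of ?bs h] bs_valid below_top
      stair_area_full[of ?bs] stair_area_above_chord[of ?bs]
    by (auto simp del: stair_area.simps) (auto simp: bs)
  then have "gibbs_profile (cumulative (gibbs k T s)) h (stair_width ?bs) w"
    using cumulative_gibbs[OF assms] by (simp add: gibbs_profile_def)
  then show ?thesis by (rule that)
qed

lemma work_eq_mixedness:
  "work k T e \<rho> \<sigma> =
     k * T * ln (mixedness (\<lambda>l. cumulative (gibbs k T \<rho>) l / (1 - e)) (cumulative (gibbs k T \<sigma>)))"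
  by (simp add: work_def rel_mix_eq_mixedness cumulative_divide)

lemma state_mixedness_attained:
  fixes k T :: real
  assumes "valid_state \<rho>" "valid_state \<sigma>" "0 \<le> e" "e < 1"
  defines "F \<equiv> \<lambda>l. cumulative (gibbs k T \<rho>) l / (1 - e)" and "G \<equiv> cumulative (gibbs k T \<sigma>)"
  shows "mixedness F G > 0" "dominates F G (mixedness F G)"
    and "\<And>m. m > 0 \<Longrightarrow> dominates F G m \<Longrightarrow> m \<le> mixedness F G"
proof -
  obtain hF ZF wF where F: "gibbs_profile (cumulative (gibbs k T \<rho>)) hF ZF wF"
    using gibbs_profile_cumulative[OF assms(1)] .
  obtain hG ZG wG where G: "gibbs_profile G hG ZG wG"
    using gibbs_profile_cumulative[OF assms(2)] unfolding G_def .
  show "mixedness F G > 0" "dominates F G (mixedness F G)"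
    and "\<And>m. m > 0 \<Longrightarrow> dominates F G m \<Longrightarrow> m \<le> mixedness F G"
    unfolding F_def using gibbs_profile_mixedness_attained[OF F G assms(3,4)] by blast+
qed

lemma work_self:
  assumes "valid_state B"
  shows "work k T 0 B B = 0"
proof -
  let ?F = "cumulative (gibbs k T B)"
  obtain h Z w where profile: "gibbs_profile ?F h Z w"
    using gibbs_profile_cumulative[OF assms] .
  have attained: "mixedness ?F ?F > 0" "dominates ?F ?F (mixedness ?F ?F)"
    "\<And>m. m > 0 \<Longrightarrow> dominates ?F ?F m \<Longrightarrow> m \<le> mixedness ?F ?F"
    using state_mixedness_attained[OF assms assms, where e=0 and k=k and T=T] by simp_all
  have "1 \<le> mixedness ?F ?F" using attained(3)[of 1] by (simp add: dominates_def)
  moreover have "mixedness ?F ?F \<le> 1"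
    using profile attained(1,2) by (intro dominates_self_le_one[of w ?F h]) (auto simp: gibbs_profile_def)
  ultimately show ?thesis by (simp add: work_eq_mixedness)
qed

lemma work_cycle:
  assumes kT: "0 \<le> k * T" and m: "m \<ge> 1" and valid: "\<forall>i\<in>{1..m}. valid_state (A i)"
    and eps: "0 \<le> eps" "real m * eps < 1"
  shows "(\<Sum>i=1..m. work k T eps (A i) (A (if i = m then 1 else i + 1)))
           \<le> work k T (real m * eps) (A 1) (A 1)"
proof -
  define B where "B i = A (if i = Suc m then 1 else i)" for i
  define C where "C i = cumulative (gibbs k T (B i))" for i
  define r where "r i = mixedness (\<lambda>l. C i l / (1 - eps)) (C (Suc i))" for i
  have "eps \<le> real m * eps" using eps m by (simp add: mult_le_cancel_right1)
  then have eps1: "eps < 1" using eps by linarith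
  have valid_B: "valid_state (B i)" if "i \<in> {1..Suc m}" for i
    using valid m that by (auto simp: B_def)
  have step: "0 < r i \<and> dominates (\<lambda>l. C i l / (1 - eps)) (C (Suc i)) (r i)" if "i \<in> {1..m}" for i
    using state_mixedness_attained[OF valid_B[of i] valid_B[of "Suc i"] eps(1) eps1, where k=k and T=T] that
    unfolding r_def C_def by auto
  have "dominates (\<lambda>l. C 1 l / (1 - eps) ^ m) (C (Suc m)) (\<Prod>i=1..m. r i)"
    using step eps1 by (intro dominates_chain) (auto simp: less_imp_le)
  moreover have "C (Suc m) = C 1" by (simp add: C_def B_def)
  ultimately have "dominates (\<lambda>l. C 1 l / (1 - eps) ^ m) (C 1) (\<Prod>i=1..m. r i)" by simp
  moreover have "C 1 l / (1 - eps) ^ m \<le> C 1 l / (1 - real m * eps)" if "0 \<le> l" for l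
  proof -
    have "valid_state (B 1)" using valid_B m by simp
    then obtain h Z w where "gibbs_profile (C 1) h Z w"
      using gibbs_profile_cumulative unfolding C_def by blast
    then have "0 \<le> C 1 l" using gibbs_profile_bounds(1) that by blast
    moreover have "1 - real m * eps \<le> (1 - eps) ^ m"
      using Bernoulli_inequality[of "- eps" m] eps1 by simp
    ultimately show ?thesis using eps by (intro divide_left_mono) auto
  qed
  ultimately have "dominates (\<lambda>l. C 1 l / (1 - real m * eps)) (C 1) (\<Prod>i=1..m. r i)"
    by (rule dominates_mono)
  moreover have prod_pos: "0 < (\<Prod>i=1..m. r i)" using step by (intro prod_pos) auto
  ultimately have prod_le: "(\<Prod>i=1..m. r i) \<le> mixedness (\<lambda>l. C 1 l / (1 - real m * eps)) (C 1)"
    using state_mixedness_attained(3)[OF valid_B[of 1] valid_B[of 1] _ eps(2), where k=k and T=T] eps m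
    by (simp add: C_def)
  have "(\<Sum>i=1..m. work k T eps (A i) (A (if i = m then 1 else i + 1))) = (\<Sum>i=1..m. k * T * ln (r i))"
    by (rule sum.cong) (auto simp: work_eq_mixedness r_def C_def B_def)
  also have "\<dots> = k * T * (\<Sum>i=1..m. ln (r i))" by (simp add: sum_distrib_left)
  also have "\<dots> = k * T * ln (\<Prod>i=1..m. r i)" using step by (subst ln_prod) force+
  also have "\<dots> \<le> k * T * ln (mixedness (\<lambda>l. C 1 l / (1 - real m * eps)) (C 1))"
    using prod_le prod_pos kT by (intro mult_left_mono ln_mono) auto
  also have "\<dots> = work k T (real m * eps) (A 1) (A 1)"
    by (simp add: work_eq_mixedness C_def B_def)
  finally show ?thesis .
qed

theorem mainTheorem4:
  fixes k T :: real
  assumes "k > 0" and "T > 0"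
  shows "(\<forall>(m::nat) (A::nat \<Rightarrow> state) (eps::real).
            m \<ge> 1 \<longrightarrow> (\<forall>i\<in>{1..m}. valid_state (A i)) \<longrightarrow> eps \<ge> 0 \<longrightarrow> real m * eps < 1 \<longrightarrow>
            (\<Sum>i=1..m. work k T eps (A i) (A (if i = m then 1 else i + 1)))
              \<le> work k T (real m * eps) (A 1) (A 1))
       \<and> (\<forall>B. valid_state B \<longrightarrow> work k T 0 B B = 0)
       \<and> (\<forall>(m::nat) (A::nat \<Rightarrow> state).
            m \<ge> 1 \<longrightarrow> (\<forall>i\<in>{1..m}. valid_state (A i)) \<longrightarrow>
            (\<Sum>i=1..m. work k T 0 (A i) (A (if i = m then 1 else i + 1))) \<le> 0)"
proof -
  have kT: "0 \<le> k * T" using assms by simp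
  have zero_tolerance:
    "(\<Sum>i=1..m. work k T 0 (A i) (A (if i = m then 1 else i + 1))) \<le> 0"
    if "m \<ge> 1" "\<forall>i\<in>{1..m}. valid_state (A i)" for m :: nat and A
    using work_cycle[OF kT that, of 0] work_self[of "A 1"] that by simp
  show ?thesis using work_cycle[OF kT] work_self zero_tolerance by blast
qed

end
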